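(* Let $\tilde T>0$ and $T=\tilde T D^{-\alpha}$. Let $K=\Phi(\mathcal C)$ and $N_T=\sum_{\mathsf x_i\in\Phi\cap\mathcal C}\mathbf 1(\mathsf g_i\|\mathsf x_i\|^{-\alpha}\ge T)$, and define the average radio resource saving $\Delta=1-\mathbb E\big[N_T/K\,\big|\,K\ge1\big]$. Then $$\Delta=1-\mathbb E\Big[\min\big\{1,\tilde T^{-\frac2\alpha}\mathsf g^{\frac2\alpha}\big\}\Big],$$ which in particular does not depend on $\lambda$. If moreover $\mathsf g$ is exponentially distributed with mean $1$, then $\Delta=1-e^{-\tilde T}-\tilde T^{-\frac2\alpha}\gamma\big(1+\tfrac2\alpha,\tilde T\big)$.
   Context: $\Phi=\{\mathsf x_i\}$ is a homogeneous Poisson point process on $\mathbb R^2$ with density $\lambda>0$, with i.i.d. marks $\mathsf g_i\ge0$ (distributed as $\mathsf g$) independent of $\Phi$, $\mathbb E[\mathsf g]=1$. Fix $\alpha>2$, $D>0$; $\mathcal C=b(o,D)$ is the disk of radius $D$ centered at the origin and $\Phi(\mathcal C)$ the number of points of $\Phi$ in $\mathcal C$. $\gamma(a,x)=\int_0^x t^{a-1}e^{-t}dt$ is the lower incomplete Gamma function. *)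

theory Defs
  imports "HOL-Probability.Probability"
begin

text \<open>A marked point is ((x1,x2), g).  A homogeneous marked Poisson point process with
  intensity lam and i.i.d. marks of law Q independent of the ground process is (marking
  theorem) a Poisson point process on the product space with intensity measure
  lam * (Lebesgue (x) Q).\<close>

definition marked_ppp ::
  "'w measure \<Rightarrow> ('w \<Rightarrow> ((real \<times> real) \<times> real) set) \<Rightarrow> real \<Rightarrow> real measure \<Rightarrow> bool" where
  "marked_ppp M Psi lam Q \<longleftrightarrow>
     prob_space M \<and>
     (\<forall>\<omega>\<in>space M. \<forall>B. bounded B \<longrightarrow> finite (Psi \<omega> \<inter> (B \<times> UNIV))) \<and>
     (\<forall>A. A \<in> sets (lborel \<Otimes>\<^sub>M Q) \<and> bounded (fst ` A) \<longrightarrow>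
        (\<lambda>\<omega>. card (Psi \<omega> \<inter> A)) \<in> measurable M (count_space UNIV) \<and>
        (\<forall>k::nat. measure M {\<omega>\<in>space M. card (Psi \<omega> \<inter> A) = k} =
           (lam * measure (lborel \<Otimes>\<^sub>M Q) A) ^ k / fact k
             * exp (- (lam * measure (lborel \<Otimes>\<^sub>M Q) A)))) \<and>
     (\<forall>(I::nat set) F. finite I \<longrightarrow>
        (\<forall>i\<in>I. F i \<in> sets (lborel \<Otimes>\<^sub>M Q) \<and> bounded (fst ` F i)) \<longrightarrow>
        disjoint_family_on F I \<longrightarrow>
        prob_space.indep_vars M (\<lambda>_. count_space UNIV) (\<lambda>i \<omega>. card (Psi \<omega> \<inter> F i)) I)"

definition lower_inc_gamma :: "real \<Rightarrow> real \<Rightarrow> real" where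
  "lower_inc_gamma a x = (LBINT t=0..x. t powr (a - 1) * exp (- t))"

definition count_K :: "('w \<Rightarrow> ((real \<times> real) \<times> real) set) \<Rightarrow> real \<Rightarrow> 'w \<Rightarrow> nat" where
  "count_K Psi D \<omega> = card {p \<in> Psi \<omega>. fst p \<in> ball 0 D}"

definition count_N :: "('w \<Rightarrow> ((real \<times> real) \<times> real) set) \<Rightarrow> real \<Rightarrow> real \<Rightarrow> real \<Rightarrow> 'w \<Rightarrow> nat" where
  "count_N Psi D alpha T \<omega> =
     card {p \<in> Psi \<omega>. fst p \<in> ball 0 D \<and> snd p * norm (fst p) powr (- alpha) \<ge> T}"

definition saving :: "'w measure \<Rightarrow> ('w \<Rightarrow> ((real \<times> real) \<times> real) set) \<Rightarrow> real \<Rightarrow> real \<Rightarrow> real \<Rightarrow> real" where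
  "saving M Psi D alpha T =
     1 - (\<integral>\<omega>. (if count_K Psi D \<omega> \<ge> 1
                 then real (count_N Psi D alpha T \<omega>) / real (count_K Psi D \<omega>) else 0) \<partial>M)
         / measure M {\<omega>\<in>space M. count_K Psi D \<omega> \<ge> 1}"

end

theory Submission
  imports Defs
begin

(* Let C = b(o,D) x R be the marked disk and A \<subseteq> C the marked points whose
   received power g |x|^-alpha reaches T.  The counts X = Phi(A) and Y = Phi(C - A) are
   independent Poisson variables with means a = lam mu(A), b = lam mu(C - A), where mu is the
   intensity measure Lebesgue (x) Q.  For such a pair, E[X/(X+Y)] = a c and E[Y/(X+Y)] = b c
   with c = E[1/(X+Y+1)] (size biasing), and the two add up to P(X+Y > 0); hence
   E[X/(X+Y); X+Y > 0] = a/(a+b) P(X+Y > 0).  So the conditional mean fraction of points of C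
   lying in A is mu(A)/mu(C), independently of lam.  Next, for a fixed mark g the covered part of the disk is a smaller disk of
   relative area min(1, Tt^(-2/alpha) g^(2/alpha)); integrating over g (Fubini) gives
   mu(A) = pi D^2 E[min(1, Tt^(-2/alpha) g^(2/alpha))] and mu(C) = pi D^2, which yields the
   first claim.  For exponential marks, splitting the integral at g = Tt gives
   exp(-Tt) + Tt^(-2/alpha) gamma(1 + 2/alpha, Tt), the second claim. *)

section \<open>Independent Poisson counts\<close>

definition poisson_pmf :: "real \<Rightarrow> nat \<Rightarrow> real" where
  "poisson_pmf a n = a ^ n / fact n * exp (- a)"

lemma suminf_single_ennreal: "(\<Sum>n. if n = i then (c n :: ennreal) else 0) = c i"
  by (rule sums_unique[symmetric]) (rule sums_single)

lemma nn_integral_indep_nat_pair: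
  fixes X Y :: "'w \<Rightarrow> nat" and f :: "nat \<Rightarrow> nat \<Rightarrow> ennreal"
  assumes "prob_space M"
    and X: "X \<in> measurable M (count_space UNIV)" and Y: "Y \<in> measurable M (count_space UNIV)"
    and ind: "\<And>n m. measure M {\<omega>\<in>space M. X \<omega> = n \<and> Y \<omega> = m}
        = measure M {\<omega>\<in>space M. X \<omega> = n} * measure M {\<omega>\<in>space M. Y \<omega> = m}"
  shows "(\<integral>\<^sup>+\<omega>. f (X \<omega>) (Y \<omega>) \<partial>M) = (\<Sum>m. \<Sum>n. f n m
      * ennreal (measure M {\<omega>\<in>space M. X \<omega> = n}) * ennreal (measure M {\<omega>\<in>space M. Y \<omega> = m}))"
proof -
  interpret prob_space M by fact
  note [measurable] = X Y
  define S where "S n m = {\<omega>\<in>space M. X \<omega> = n \<and> Y \<omega> = m}" for n m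
  have S_sets: "S n m \<in> sets M" for n m
    unfolding S_def by measurable
  have decompose: "f (X \<omega>) (Y \<omega>) = (\<Sum>m. \<Sum>n. f n m * indicator (S n m) \<omega>)"
    if "\<omega> \<in> space M" for \<omega>
  proof -
    have "(\<lambda>n. f n m * indicator (S n m) \<omega>)
        = (\<lambda>n. if n = X \<omega> then (if m = Y \<omega> then f (X \<omega>) m else 0) else 0)" for m
      using that by (auto simp: S_def indicator_def)
    then show ?thesis
      using suminf_single_ennreal[of "Y \<omega>" "\<lambda>m. f (X \<omega>) m"] by (simp add: suminf_single_ennreal)
  qed
  have "(\<integral>\<^sup>+\<omega>. f (X \<omega>) (Y \<omega>) \<partial>M) = (\<integral>\<^sup>+\<omega>. (\<Sum>m. \<Sum>n. f n m * indicator (S n m) \<omega>) \<partial>M)"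
    by (rule nn_integral_cong) (simp add: decompose)
  also have "\<dots> = (\<Sum>m. \<Sum>n. \<integral>\<^sup>+\<omega>. f n m * indicator (S n m) \<omega> \<partial>M)"
    using S_sets by (simp add: nn_integral_suminf)
  also have "\<dots> = (\<Sum>m. \<Sum>n. f n m * emeasure M (S n m))"
    using S_sets by (simp add: nn_integral_cmult_indicator)
  finally show ?thesis
    by (simp add: emeasure_eq_measure S_def ind ennreal_mult mult.assoc)
qed

lemma poisson_size_bias:
  assumes "a \<ge> 0"
  shows "(\<Sum>n. ennreal (real n / real (n + m)) * ennreal (poisson_pmf a n))
       = ennreal a * (\<Sum>n. ennreal (1 / real (n + m + 1)) * ennreal (poisson_pmf a n))"
proof -
  let ?F = "\<lambda>n. ennreal (real n / real (n + m)) * ennreal (poisson_pmf a n)"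
  have shift: "?F (j + 1) = ennreal a * (ennreal (1 / real (j + m + 1)) * ennreal (poisson_pmf a j))"
    for j
  proof -
    have "poisson_pmf a (j + 1) = a / real (j + 1) * poisson_pmf a j"
      by (simp add: poisson_pmf_def fact_Suc field_simps)
    then have "real (j + 1) / real (j + 1 + m) * poisson_pmf a (j + 1)
        = a * (1 / real (j + m + 1) * poisson_pmf a j)"
      by (simp add: field_simps)
    then show ?thesis
      using assms by (simp add: ennreal_mult[symmetric] poisson_pmf_def)
  qed
  have "suminf ?F = (\<Sum>j. ?F (j + 1)) + (\<Sum>j<1. ?F j)"
    by (rule suminf_offset) simp
  also have "\<dots> = (\<Sum>j. ennreal a * (ennreal (1 / real (j + m + 1)) * ennreal (poisson_pmf a j)))"
    by (simp only: shift) simp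
  finally show ?thesis
    by simp
qed

lemma indep_poisson_both_zero:
  assumes "prob_space M"
    and ind: "\<And>n m. measure M {\<omega>\<in>space M. X \<omega> = n \<and> Y \<omega> = m}
        = measure M {\<omega>\<in>space M. X \<omega> = n} * measure M {\<omega>\<in>space M. Y \<omega> = m}"
    and pX: "\<And>n. measure M {\<omega>\<in>space M. X \<omega> = n} = poisson_pmf a n"
    and pY: "\<And>n. measure M {\<omega>\<in>space M. Y \<omega> = n} = poisson_pmf b n"
  shows "measure M {\<omega>\<in>space M. X \<omega> = 0 \<and> Y \<omega> = 0} = exp (- (a + b))"
  using ind pX pY by (simp add: poisson_pmf_def exp_add[symmetric])

lemma indep_poisson_fraction_size_bias:
  fixes X Y :: "'w \<Rightarrow> nat"
  assumes P: "prob_space M"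
    and X: "X \<in> measurable M (count_space UNIV)" and Y: "Y \<in> measurable M (count_space UNIV)"
    and ind: "\<And>n m. measure M {\<omega>\<in>space M. X \<omega> = n \<and> Y \<omega> = m}
        = measure M {\<omega>\<in>space M. X \<omega> = n} * measure M {\<omega>\<in>space M. Y \<omega> = m}"
    and pX: "\<And>n. measure M {\<omega>\<in>space M. X \<omega> = n} = poisson_pmf a n"
    and a: "a \<ge> 0"
  shows "(\<integral>\<^sup>+\<omega>. ennreal (real (X \<omega>) / real (X \<omega> + Y \<omega>)) \<partial>M)
      = ennreal a * (\<integral>\<^sup>+\<omega>. ennreal (1 / real (X \<omega> + Y \<omega> + 1)) \<partial>M)"
proof -
  let ?pY = "\<lambda>m. ennreal (measure M {\<omega>\<in>space M. Y \<omega> = m})"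
  have "(\<integral>\<^sup>+\<omega>. ennreal (real (X \<omega>) / real (X \<omega> + Y \<omega>)) \<partial>M)
     = (\<Sum>m. (\<Sum>n. ennreal (real n / real (n + m)) * ennreal (poisson_pmf a n)) * ?pY m)"
    using nn_integral_indep_nat_pair[OF P X Y ind, of "\<lambda>n m. ennreal (real n / real (n + m))"]
    by (simp add: pX)
  also have "\<dots> = (\<Sum>m. ennreal a * ((\<Sum>n. ennreal (1 / real (n + m + 1))
          * ennreal (poisson_pmf a n)) * ?pY m))"
    unfolding poisson_size_bias[OF a] by (simp only: mult.assoc)
  also have "\<dots> = ennreal a * (\<integral>\<^sup>+\<omega>. ennreal (1 / real (X \<omega> + Y \<omega> + 1)) \<partial>M)"
    using nn_integral_indep_nat_pair[OF P X Y ind, of "\<lambda>n m. ennreal (1 / real (n + m + 1))"]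
    by (simp add: pX)
  finally show ?thesis .
qed

text \<open>The key identity: for independent Poisson counts X, Y with means a, b,
  E[X/(X+Y)] = a/(a+b) (1 - exp(-(a+b))), where 0/0 = 0.  Symmetrically E[Y/(X+Y)] is the
  same expression with a, b swapped, and the two sum to P(X + Y > 0).\<close>
lemma indep_poisson_fraction:
  fixes X Y :: "'w \<Rightarrow> nat"
  assumes P: "prob_space M"
    and X: "X \<in> measurable M (count_space UNIV)" and Y: "Y \<in> measurable M (count_space UNIV)"
    and ind: "\<And>n m. measure M {\<omega>\<in>space M. X \<omega> = n \<and> Y \<omega> = m}
        = measure M {\<omega>\<in>space M. X \<omega> = n} * measure M {\<omega>\<in>space M. Y \<omega> = m}"
    and pX: "\<And>n. measure M {\<omega>\<in>space M. X \<omega> = n} = poisson_pmf a n"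
    and pY: "\<And>n. measure M {\<omega>\<in>space M. Y \<omega> = n} = poisson_pmf b n"
    and a: "a \<ge> 0" and b: "b \<ge> 0" and ab: "a + b > 0"
  shows "(\<integral>\<^sup>+\<omega>. ennreal (real (X \<omega>) / real (X \<omega> + Y \<omega>)) \<partial>M)
      = ennreal (a / (a + b) * (1 - exp (- (a + b))))"
proof -
  interpret prob_space M by fact
  note [measurable] = X Y
  have ind_swap: "\<And>n m. measure M {\<omega>\<in>space M. Y \<omega> = n \<and> X \<omega> = m}
        = measure M {\<omega>\<in>space M. Y \<omega> = n} * measure M {\<omega>\<in>space M. X \<omega> = m}"
    using ind by (simp add: conj_commute mult.commute)
  define c where "c = (\<integral>\<^sup>+\<omega>. ennreal (1 / real (X \<omega> + Y \<omega> + 1)) \<partial>M)"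
  have EX: "(\<integral>\<^sup>+\<omega>. ennreal (real (X \<omega>) / real (X \<omega> + Y \<omega>)) \<partial>M) = ennreal a * c"
    unfolding c_def by (rule indep_poisson_fraction_size_bias[OF P X Y ind pX a])
  have EY: "(\<integral>\<^sup>+\<omega>. ennreal (real (Y \<omega>) / real (X \<omega> + Y \<omega>)) \<partial>M) = ennreal b * c"
    using indep_poisson_fraction_size_bias[OF P Y X ind_swap pY b] by (simp add: c_def add.commute)
  define Z where "Z = {\<omega>\<in>space M. X \<omega> = 0 \<and> Y \<omega> = 0}"
  have Z_sets: "Z \<in> sets M"
    unfolding Z_def by measurable
  have fractions_sum: "ennreal (real (X \<omega>) / real (X \<omega> + Y \<omega>))
      + ennreal (real (Y \<omega>) / real (X \<omega> + Y \<omega>)) = indicator (space M - Z) \<omega>"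
    if "\<omega> \<in> space M" for \<omega>
  proof (cases "X \<omega> + Y \<omega> = 0")
    case False
    then have "real (X \<omega>) + real (Y \<omega>) > 0"
      by linarith
    then have "real (X \<omega>) / real (X \<omega> + Y \<omega>) + real (Y \<omega>) / real (X \<omega> + Y \<omega>) = 1"
      by (simp add: add_divide_distrib[symmetric])
    then show ?thesis
      using that False by (simp add: Z_def ennreal_plus[symmetric] del: ennreal_plus)
  qed (use that in \<open>simp add: Z_def\<close>)
  have "ennreal a * c + ennreal b * c
      = (\<integral>\<^sup>+\<omega>. ennreal (real (X \<omega>) / real (X \<omega> + Y \<omega>))
          + ennreal (real (Y \<omega>) / real (X \<omega> + Y \<omega>)) \<partial>M)"
    unfolding EX[symmetric] EY[symmetric] by (rule nn_integral_add[symmetric]) measurable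
  also have "\<dots> = (\<integral>\<^sup>+\<omega>. indicator (space M - Z) \<omega> \<partial>M)"
    by (rule nn_integral_cong) (rule fractions_sum)
  also have "\<dots> = emeasure M (space M - Z)"
    using Z_sets by simp
  also have "\<dots> = ennreal (1 - exp (- (a + b)))"
    using Z_sets indep_poisson_both_zero[OF P ind pX pY]
    by (simp add: emeasure_eq_measure prob_compl Z_def)
  finally have total: "ennreal a * c + ennreal b * c = ennreal (1 - exp (- (a + b)))" .
  have "c \<le> (\<integral>\<^sup>+\<omega>. 1 \<partial>M)"
    unfolding c_def by (rule nn_integral_mono) simp
  then have "c \<le> 1"
    by (simp add: emeasure_space_1)
  then obtain c' where c': "c = ennreal c'" "c' \<ge> 0"
    by (metis ennreal_cases ennreal_one_neq_top neq_top_trans)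
  have "(a + b) * c' = 1 - exp (- (a + b))"
    using total a b c' ab
    by (simp add: ennreal_mult[symmetric] ennreal_plus[symmetric] distrib_right del: ennreal_plus)
  then have "a / (a + b) * (1 - exp (- (a + b))) = a / (a + b) * ((a + b) * c')"
    by simp
  then have "a * c' = a / (a + b) * (1 - exp (- (a + b)))"
    using ab by simp
  then show ?thesis
    using EX c' a by (simp add: ennreal_mult[symmetric])
qed

section \<open>Fractions of points of a marked Poisson point process\<close>

lemma marked_ppp_count_poisson:
  assumes "marked_ppp M Psi lam Q"
    and "A \<in> sets (lborel \<Otimes>\<^sub>M Q)" and "bounded (fst ` A)"
  shows "(\<lambda>\<omega>. card (Psi \<omega> \<inter> A)) \<in> measurable M (count_space UNIV)"
    and "measure M {\<omega>\<in>space M. card (Psi \<omega> \<inter> A) = n}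
           = poisson_pmf (lam * measure (lborel \<Otimes>\<^sub>M Q) A) n"
  using assms unfolding marked_ppp_def poisson_pmf_def by blast+

lemma marked_ppp_indep_pair:
  assumes ppp: "marked_ppp M Psi lam Q"
    and A: "A \<in> sets (lborel \<Otimes>\<^sub>M Q)" "bounded (fst ` A)"
    and B: "B \<in> sets (lborel \<Otimes>\<^sub>M Q)" "bounded (fst ` B)"
    and disj: "A \<inter> B = {}"
  shows "measure M {\<omega>\<in>space M. card (Psi \<omega> \<inter> A) = n \<and> card (Psi \<omega> \<inter> B) = m}
       = measure M {\<omega>\<in>space M. card (Psi \<omega> \<inter> A) = n}
         * measure M {\<omega>\<in>space M. card (Psi \<omega> \<inter> B) = m}"
proof -
  interpret prob_space M
    using ppp by (simp add: marked_ppp_def)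
  define F where "F i = (if i = (0::nat) then A else B)" for i
  define G where "G i = (if i = (0::nat) then {n} else {m})" for i
  have "indep_vars (\<lambda>_. count_space UNIV) (\<lambda>i \<omega>. card (Psi \<omega> \<inter> F i)) {0, 1}"
    using ppp A B disj unfolding marked_ppp_def
    by (elim conjE allE impE) (auto simp: F_def disjoint_family_on_def)
  then have "prob (\<Inter>i\<in>{0, 1}. (\<lambda>\<omega>. card (Psi \<omega> \<inter> F i)) -` G i \<inter> space M)
      = (\<Prod>i\<in>{0, 1}. prob ((\<lambda>\<omega>. card (Psi \<omega> \<inter> F i)) -` G i \<inter> space M))"
    by (rule indep_varsD) auto
  moreover have "(\<Inter>i\<in>{0, 1}. (\<lambda>\<omega>. card (Psi \<omega> \<inter> F i)) -` G i \<inter> space M)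
      = {\<omega>\<in>space M. card (Psi \<omega> \<inter> A) = n \<and> card (Psi \<omega> \<inter> B) = m}"
    by (auto simp: F_def G_def)
  moreover have "(\<lambda>\<omega>. card (Psi \<omega> \<inter> F 0)) -` G 0 \<inter> space M
      = {\<omega>\<in>space M. card (Psi \<omega> \<inter> A) = n}"
    by (auto simp: F_def G_def)
  moreover have "(\<lambda>\<omega>. card (Psi \<omega> \<inter> F 1)) -` G 1 \<inter> space M
      = {\<omega>\<in>space M. card (Psi \<omega> \<inter> B) = m}"
    by (auto simp: F_def G_def)
  ultimately show ?thesis
    by simp
qed

lemma marked_ppp_finite:
  assumes "marked_ppp M Psi lam Q" and "\<omega> \<in> space M" and "bounded (fst ` C)"
  shows "finite (Psi \<omega> \<inter> C)"
proof -
  have "finite (Psi \<omega> \<inter> (fst ` C \<times> UNIV))"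
    using assms unfolding marked_ppp_def by blast
  moreover have "Psi \<omega> \<inter> C \<subseteq> Psi \<omega> \<inter> (fst ` C \<times> UNIV)"
    by (force simp: mem_Times_iff)
  ultimately show ?thesis
    by (rule finite_subset[rotated])
qed

lemma marked_ppp_fraction:
  assumes ppp: "marked_ppp M Psi lam Q" and lam: "lam > 0"
    and A: "A \<in> sets (lborel \<Otimes>\<^sub>M Q)" and C: "C \<in> sets (lborel \<Otimes>\<^sub>M Q)"
    and AC: "A \<subseteq> C" and C_bounded: "bounded (fst ` C)"
    and C_pos: "measure (lborel \<Otimes>\<^sub>M Q) C > 0"
  shows "(\<integral>\<omega>. (if card (Psi \<omega> \<inter> C) \<ge> 1
                 then real (card (Psi \<omega> \<inter> A)) / real (card (Psi \<omega> \<inter> C)) else 0) \<partial>M)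
         / measure M {\<omega>\<in>space M. card (Psi \<omega> \<inter> C) \<ge> 1}
       = measure (lborel \<Otimes>\<^sub>M Q) A / measure (lborel \<Otimes>\<^sub>M Q) C"
proof -
  let ?mu = "measure (lborel \<Otimes>\<^sub>M Q)"
  have P: "prob_space M"
    using ppp by (simp add: marked_ppp_def)
  interpret prob_space M by (rule P)
  define B where "B = C - A"
  have B: "B \<in> sets (lborel \<Otimes>\<^sub>M Q)"
    using A C by (simp add: B_def)
  have A_bounded: "bounded (fst ` A)" and B_bounded: "bounded (fst ` B)"
    using C_bounded AC by (auto simp: B_def intro: bounded_subset)
  have "emeasure (lborel \<Otimes>\<^sub>M Q) C \<noteq> \<top>"
    using C_pos by (auto simp: measure_def)
  then have mu_B: "?mu B = ?mu C - ?mu A"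
    unfolding B_def using C A AC by (simp add: measure_Diff)
  define a where "a = lam * ?mu A"
  define b where "b = lam * ?mu B"
  have a: "a \<ge> 0" and b: "b \<ge> 0"
    using lam by (simp_all add: a_def b_def)
  have ab: "a + b > 0" and ratio: "a / (a + b) = ?mu A / ?mu C"
    using lam C_pos by (simp_all add: a_def b_def mu_B algebra_simps)
  define X where "X \<omega> = card (Psi \<omega> \<inter> A)" for \<omega>
  define Y where "Y \<omega> = card (Psi \<omega> \<inter> B)" for \<omega>
  note X_count = marked_ppp_count_poisson[OF ppp A A_bounded, folded X_def a_def]
  note Y_count = marked_ppp_count_poisson[OF ppp B B_bounded, folded Y_def b_def]
  note [measurable] = X_count(1) Y_count(1)
  have ind: "measure M {\<omega>\<in>space M. X \<omega> = n \<and> Y \<omega> = m}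
      = measure M {\<omega>\<in>space M. X \<omega> = n} * measure M {\<omega>\<in>space M. Y \<omega> = m}" for n m
    unfolding X_def Y_def
    by (rule marked_ppp_indep_pair[OF ppp A A_bounded B B_bounded]) (auto simp: B_def)
  have split_count: "card (Psi \<omega> \<inter> C) = X \<omega> + Y \<omega>" if "\<omega> \<in> space M" for \<omega>
  proof -
    have finite_C: "finite (Psi \<omega> \<inter> C)"
      using marked_ppp_finite[OF ppp that C_bounded] .
    have "Psi \<omega> \<inter> C = (Psi \<omega> \<inter> A) \<union> (Psi \<omega> \<inter> B)"
      using AC by (auto simp: B_def)
    also have "card \<dots> = card (Psi \<omega> \<inter> A) + card (Psi \<omega> \<inter> B)"
      using finite_C AC by (intro card_Un_disjoint) (auto simp: B_def elim: finite_subset[rotated])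
    finally show ?thesis
      unfolding X_def Y_def .
  qed
  have "(\<integral>\<omega>. (if card (Psi \<omega> \<inter> C) \<ge> 1
                 then real (card (Psi \<omega> \<inter> A)) / real (card (Psi \<omega> \<inter> C)) else 0) \<partial>M)
      = (\<integral>\<omega>. real (X \<omega>) / real (X \<omega> + Y \<omega>) \<partial>M)"
    by (rule Bochner_Integration.integral_cong) (auto simp: split_count X_def)
  also have "\<dots> = enn2real (\<integral>\<^sup>+\<omega>. ennreal (real (X \<omega>) / real (X \<omega> + Y \<omega>)) \<partial>M)"
    by (rule integral_eq_nn_integral) auto
  also have "\<dots> = a / (a + b) * (1 - exp (- (a + b)))"
  proof -
    have "0 \<le> a / (a + b) * (1 - exp (- (a + b)))"
      using a ab by simp
    then show ?thesis
      by (simp only: indep_poisson_fraction[OF P X_count(1) Y_count(1) ind X_count(2) Y_count(2)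
            a b ab] enn2real_ennreal)
  qed
  finally have expectation: "(\<integral>\<omega>. (if card (Psi \<omega> \<inter> C) \<ge> 1
                 then real (card (Psi \<omega> \<inter> A)) / real (card (Psi \<omega> \<inter> C)) else 0) \<partial>M)
      = a / (a + b) * (1 - exp (- (a + b)))" .
  have "{\<omega>\<in>space M. card (Psi \<omega> \<inter> C) \<ge> 1} = space M - {\<omega>\<in>space M. X \<omega> = 0 \<and> Y \<omega> = 0}"
    by (auto simp: split_count)
  then have nonempty: "prob {\<omega>\<in>space M. card (Psi \<omega> \<inter> C) \<ge> 1} = 1 - exp (- (a + b))"
    using indep_poisson_both_zero[OF P ind X_count(2) Y_count(2)] by (simp add: prob_compl)
  have "exp (- (a + b)) < 1"
    using ab by simp
  then show ?thesis
    unfolding expectation nonempty ratio[symmetric] by simp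
qed

section \<open>The coverage region in the plane\<close>

lemma powr_le_iff_le_root:
  fixes x y a :: real
  assumes "a > 0" "x \<ge> 0" "y \<ge> 0"
  shows "x powr a \<le> y \<longleftrightarrow> x \<le> y powr (1 / a)"
proof
  assume "x powr a \<le> y"
  then have "(x powr a) powr (1 / a) \<le> y powr (1 / a)"
    using assms by (intro powr_mono2) auto
  then show "x \<le> y powr (1 / a)"
    using assms by (simp add: powr_powr)
next
  assume "x \<le> y powr (1 / a)"
  then have "x powr a \<le> (y powr (1 / a)) powr a"
    using assms by (intro powr_mono2) auto
  then show "x powr a \<le> y"
    using assms by (simp add: powr_powr)
qed

lemma coverage_threshold_iff:
  fixes n alpha D Tt g :: real
  assumes "alpha > 0" "D > 0" "Tt > 0" "g > 0" "n > 0"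
  shows "Tt * D powr (- alpha) \<le> g * n powr (- alpha) \<longleftrightarrow> n \<le> D * (g / Tt) powr (1 / alpha)"
proof -
  have pos: "D powr alpha > 0" "n powr alpha > 0"
    using assms by auto
  have "Tt * D powr (- alpha) \<le> g * n powr (- alpha) \<longleftrightarrow> Tt * n powr alpha \<le> g * D powr alpha"
    using pos by (simp add: powr_minus field_simps)
  also have "\<dots> \<longleftrightarrow> (n / D) powr alpha \<le> g / Tt"
    using pos assms by (simp add: powr_divide field_simps)
  also have "\<dots> \<longleftrightarrow> n / D \<le> (g / Tt) powr (1 / alpha)"
    using assms by (intro powr_le_iff_le_root) auto
  also have "\<dots> \<longleftrightarrow> n \<le> D * (g / Tt) powr (1 / alpha)"
    using assms by (simp add: field_simps)
  finally show ?thesis .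
qed

lemma coverage_radius_sq:
  fixes g Tt alpha :: real
  assumes "Tt > 0" "g > 0"
  shows "((g / Tt) powr (1 / alpha))^2 = Tt powr (- 2 / alpha) * g powr (2 / alpha)"
proof -
  have "((g / Tt) powr (1 / alpha))^2 = (g / Tt) powr (2 / alpha)"
    using assms by (simp add: powr_realpow[symmetric] powr_powr)
  also have "\<dots> = g powr (2 / alpha) / Tt powr (2 / alpha)"
    using assms by (simp add: powr_divide)
  also have "\<dots> = Tt powr (- 2 / alpha) * g powr (2 / alpha)"
    by (simp add: powr_minus divide_inverse minus_divide_left)
  finally show ?thesis .
qed

lemma unit_ball_vol_2: "unit_ball_vol 2 = pi"
  using unit_ball_vol_even[of 1] by simp

lemma emeasure_ball_inter_cball:
  fixes D r :: real
  assumes "D > 0" "r > 0"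
  shows "emeasure lborel (ball (0::real \<times> real) D \<inter> cball 0 r) = ennreal (pi * (min D r)^2)"
proof (cases "r < D")
  case True
  then have "ball (0::real \<times> real) D \<inter> cball 0 r = cball 0 r"
    by auto
  then show ?thesis
    using assms True by (simp add: emeasure_cball unit_ball_vol_2 power2_eq_square)
next
  case False
  then have "ball (0::real \<times> real) D \<inter> cball 0 r = ball 0 D"
    by auto
  then show ?thesis
    using assms False by (simp add: emeasure_ball unit_ball_vol_2 power2_eq_square)
qed

lemma coverage_area:
  fixes alpha D Tt g :: real
  assumes alpha: "alpha > 0" and D: "D > 0" and Tt: "Tt > 0" and g: "g \<ge> 0"
  shows "emeasure lborel {x::real \<times> real. x \<in> ball 0 D \<and> Tt * D powr (- alpha) \<le> g * norm x powr (- alpha)}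
     = ennreal (pi * D^2 * min 1 (Tt powr (- 2 / alpha) * g powr (2 / alpha)))"
proof (cases "g = 0")
  case True
  have "Tt * D powr (- alpha) > 0"
    using D Tt by simp
  then show ?thesis
    using True by (simp del: mem_ball)
next
  case False
  then have g_pos: "g > 0"
    using g by simp
  define s where "s = (g / Tt) powr (1 / alpha)"
  have s: "s > 0"
    using g_pos Tt by (simp add: s_def)
  have region: "{x::real \<times> real. x \<in> ball 0 D \<and> Tt * D powr (- alpha) \<le> g * norm x powr (- alpha)}
      = (ball 0 D \<inter> cball 0 (D * s)) - {0}"
  proof (rule set_eqI)
    fix x :: "real \<times> real"
    have "Tt * D powr (- alpha) > 0"
      using D Tt by simp
    moreover have "Tt * D powr (- alpha) \<le> g * norm x powr (- alpha) \<longleftrightarrow> norm x \<le> D * s"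
      if "x \<noteq> 0"
      unfolding s_def using that by (intro coverage_threshold_iff alpha D Tt g_pos) simp
    ultimately show "x \<in> {x. x \<in> ball 0 D \<and> Tt * D powr (- alpha) \<le> g * norm x powr (- alpha)}
        \<longleftrightarrow> x \<in> (ball 0 D \<inter> cball 0 (D * s)) - {0}"
      by (cases "x = 0") (auto simp: dist_norm)
  qed
  have "(min D (D * s))^2 = D^2 * min 1 (s^2)"
  proof (cases "s < 1")
    case True
    then have "s^2 < 1"
      using s by (simp add: power_less_one_iff)
    then show ?thesis
      using True D by (simp add: power_mult_distrib)
  next
    case False
    then have "s^2 \<ge> 1"
      using s by (simp add: one_le_power)
    then show ?thesis
      using False D by simp
  qed
  moreover have "s^2 = Tt powr (- 2 / alpha) * g powr (2 / alpha)"
    unfolding s_def using Tt g_pos by (rule coverage_radius_sq)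
  moreover have "{0::real \<times> real} \<in> null_sets lborel"
    by (simp add: null_sets_def)
  then have "emeasure lborel ((ball (0::real \<times> real) D \<inter> cball 0 (D * s)) - {0})
      = emeasure lborel (ball (0::real \<times> real) D \<inter> cball 0 (D * s))"
    by (rule emeasure_Diff_null_set) auto
  ultimately show ?thesis
    unfolding region using D s by (simp add: emeasure_ball_inter_cball mult.assoc)
qed

section \<open>Intensity measures of the marked regions\<close>

lemma coverage_set_measurable:
  fixes Q :: "real measure"
  assumes "sets Q = sets borel"
  shows "{p::(real \<times> real) \<times> real. fst p \<in> ball 0 D \<and> T \<le> snd p * norm (fst p) powr (- alpha)}
           \<in> sets (lborel \<Otimes>\<^sub>M Q)"
proof -
  have sets_eq: "sets (lborel \<Otimes>\<^sub>M Q)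
      = sets (borel \<Otimes>\<^sub>M (borel :: real measure) :: ((real \<times> real) \<times> real) measure)"
    by (rule sets_pair_measure_cong) (simp_all add: assms)
  have "Measurable.pred (borel \<Otimes>\<^sub>M borel)
      (\<lambda>p::(real \<times> real) \<times> real. norm (fst p) < D \<and> T \<le> snd p * norm (fst p) powr (- alpha))"
    by measurable
  then have "{p \<in> space (borel \<Otimes>\<^sub>M borel).
      norm (fst p) < D \<and> T \<le> snd p * norm (fst p) powr (- alpha)}
        \<in> sets (borel \<Otimes>\<^sub>M (borel :: real measure) :: ((real \<times> real) \<times> real) measure)"
    by (simp add: pred_def)
  moreover have "{p \<in> space (borel \<Otimes>\<^sub>M borel).
      norm (fst p) < D \<and> T \<le> snd p * norm (fst p) powr (- alpha)}
      = {p::(real \<times> real) \<times> real. fst p \<in> ball 0 D \<and> T \<le> snd p * norm (fst p) powr (- alpha)}"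
    by (auto simp: space_pair_measure dist_norm)
  ultimately show ?thesis
    using sets_eq by simp
qed

lemma marked_disk_measurable:
  fixes Q :: "real measure"
  assumes "sets Q = sets borel"
  shows "ball (0::real \<times> real) D \<times> UNIV \<in> sets (lborel \<Otimes>\<^sub>M Q)"
proof -
  have "UNIV = space Q"
    using assms by (metis sets_eq_imp_space_eq space_borel)
  then show ?thesis
    by (metis pair_measureI sets.top sets_lborel open_ball borel_open)
qed

text \<open>Fubini over the mark: the intensity measure of the coverage set is the mean covered area.\<close>
lemma coverage_set_measure:
  fixes Q :: "real measure" and alpha D Tt :: real
  assumes "alpha > 0" "D > 0" "Tt > 0" and Q: "prob_space Q" and sQ: "sets Q = sets borel"
    and nonneg: "AE g in Q. g \<ge> 0"
  shows "emeasure (lborel \<Otimes>\<^sub>M Q) {p::(real \<times> real) \<times> real.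
            fst p \<in> ball 0 D \<and> Tt * D powr (- alpha) \<le> snd p * norm (fst p) powr (- alpha)}
     = ennreal (pi * D^2 * (\<integral>g. min 1 (Tt powr (- 2 / alpha) * g powr (2 / alpha)) \<partial>Q))"
proof -
  interpret Q: prob_space Q by fact
  interpret pair_sigma_finite "lborel :: (real \<times> real) measure" Q
    by (simp add: pair_sigma_finite_def Q.sigma_finite_measure_axioms
        lborel.sigma_finite_measure_axioms)
  let ?A = "{p::(real \<times> real) \<times> real.
      fst p \<in> ball 0 D \<and> Tt * D powr (- alpha) \<le> snd p * norm (fst p) powr (- alpha)}"
  let ?h = "\<lambda>g::real. min 1 (Tt powr (- 2 / alpha) * g powr (2 / alpha))"
  have h_measurable: "?h \<in> borel_measurable Q"
    by (subst measurable_cong_sets[OF sQ refl]) measurable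
  have h_integrable: "integrable Q ?h"
  proof (rule Q.integrable_const_bound[where B = 1])
    have "norm (min 1 y) \<le> 1" if "y \<ge> 0" for y :: real
      using that by (simp add: min_def)
    then show "AE g in Q. norm (?h g) \<le> 1"
      by simp
  qed (rule h_measurable)
  have "emeasure (lborel \<Otimes>\<^sub>M Q) ?A = (\<integral>\<^sup>+g. emeasure lborel ((\<lambda>x. (x, g)) -` ?A) \<partial>Q)"
    by (rule emeasure_pair_measure_alt2) (rule coverage_set_measurable[OF sQ])
  also have "\<dots> = (\<integral>\<^sup>+g. ennreal (pi * D^2) * ennreal (?h g) \<partial>Q)"
  proof (rule nn_integral_cong_AE)
    show "AE g in Q. emeasure lborel ((\<lambda>x. (x, g)) -` ?A) = ennreal (pi * D^2) * ennreal (?h g)"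
      using nonneg
    proof eventually_elim
      case (elim g)
      have "(\<lambda>x. (x, g)) -` ?A
          = {x::real \<times> real. x \<in> ball 0 D \<and> Tt * D powr (- alpha) \<le> g * norm x powr (- alpha)}"
        by auto
      then show ?case
        using coverage_area[OF assms(1-3) elim] by (simp add: ennreal_mult)
    qed
  qed
  also have "\<dots> = ennreal (pi * D^2) * (\<integral>\<^sup>+g. ennreal (?h g) \<partial>Q)"
    by (rule nn_integral_cmult) (use h_measurable in measurable)
  also have "(\<integral>\<^sup>+g. ennreal (?h g) \<partial>Q) = ennreal (\<integral>g. ?h g \<partial>Q)"
    by (rule nn_integral_eq_integral[OF h_integrable]) simp
  finally show ?thesis
    by (simp add: ennreal_mult)
qed

lemma marked_disk_measure:
  fixes Q :: "real measure" and D :: real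
  assumes "D > 0" and Q: "prob_space Q" and sQ: "sets Q = sets borel"
  shows "emeasure (lborel \<Otimes>\<^sub>M Q) (ball (0::real \<times> real) D \<times> UNIV) = ennreal (pi * D^2)"
proof -
  interpret Q: prob_space Q by fact
  have UNIV_eq: "UNIV = space Q"
    using sQ by (metis sets_eq_imp_space_eq space_borel)
  then have "emeasure Q UNIV = 1"
    by (metis Q.emeasure_space_1)
  moreover have "emeasure (lborel \<Otimes>\<^sub>M Q) (ball (0::real \<times> real) D \<times> space Q)
      = emeasure lborel (ball (0::real \<times> real) D) * emeasure Q (space Q)"
    by (rule Q.emeasure_pair_measure_Times) auto
  ultimately show ?thesis
    using assms by (simp add: UNIV_eq[symmetric] emeasure_ball unit_ball_vol_2 power2_eq_square)
qed

section \<open>Mean coverage for Rayleigh fading\<close>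

lemma exponential_coverage_split:
  fixes alpha Tt x :: real
  assumes alpha: "alpha > 0" and Tt: "Tt > 0"
  shows "ennreal (exponential_density 1 x) * ennreal (min 1 (Tt powr (- 2 / alpha) * x powr (2 / alpha)))
     = ennreal (Tt powr (- 2 / alpha) * (x powr (2 / alpha) * exp (- x))) * indicator {0<..Tt} x
       + ennreal (exp (- x)) * indicator {Tt<..} x"
proof -
  have ratio: "Tt powr (- 2 / alpha) * x powr (2 / alpha) = (x / Tt) powr (2 / alpha)" if "x > 0"
  proof -
    have "(x / Tt) powr (2 / alpha) = x powr (2 / alpha) / Tt powr (2 / alpha)"
      by (rule powr_divide)
    then show ?thesis
      by (simp add: powr_minus minus_divide_left divide_inverse mult.commute)
  qed
  consider "x \<le> 0" | "0 < x \<and> x \<le> Tt" | "Tt < x"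
    by linarith
  then show ?thesis
  proof cases
    case 1
    then show ?thesis
      using Tt by (cases "x = 0") (simp_all add: indicator_def exponential_density_def)
  next
    case 2
    then have "(x / Tt) powr (2 / alpha) \<le> 1"
      using Tt alpha by (intro powr_le1) auto
    then have "min 1 (Tt powr (- 2 / alpha) * x powr (2 / alpha))
        = Tt powr (- 2 / alpha) * x powr (2 / alpha)"
      using 2 ratio by simp
    then show ?thesis
      using 2 by (simp add: exponential_density_def indicator_def ennreal_mult[symmetric])
  next
    case 3
    then have "1 \<le> (x / Tt) powr (2 / alpha)"
      using Tt alpha by (intro ge_one_powr_ge_zero) auto
    then show ?thesis
      using 3 Tt ratio by (simp add: indicator_def exponential_density_def)
  qed
qed

lemma nn_integral_exp_tail:
  fixes Tt :: real
  assumes Tt: "Tt > 0"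
  shows "(\<integral>\<^sup>+x. ennreal (exp (- x)) * indicator {Tt<..} x \<partial>lborel) = ennreal (exp (- Tt))"
proof -
  let ?E = "density lborel (exponential_density 1)"
  interpret E: prob_space ?E
    by (rule prob_space_exponential_density) simp
  have "emeasure ?E {..Tt} = ennreal (1 - exp (- Tt))"
    using emeasure_erlang_density[of 1 0 Tt] Tt by (simp add: erlang_CDF_0)
  then have "measure ?E {..Tt} = 1 - exp (- Tt)"
    using Tt by (simp add: E.emeasure_eq_measure)
  moreover have "measure ?E {Tt<..} = 1 - measure ?E {..Tt}"
    using E.prob_compl[of "{..Tt}"] by (simp add: Compl_eq_Diff_UNIV[symmetric] not_le)
  moreover have "emeasure ?E {Tt<..}
      = (\<integral>\<^sup>+x. ennreal (exponential_density 1 x) * indicator {Tt<..} x \<partial>lborel)"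
    by (rule emeasure_density) auto
  moreover have "\<dots> = (\<integral>\<^sup>+x. ennreal (exp (- x)) * indicator {Tt<..} x \<partial>lborel)"
    using Tt by (intro nn_integral_cong) (auto simp: indicator_def exponential_density_def)
  ultimately show ?thesis
    by (simp add: E.emeasure_eq_measure)
qed

lemma lower_inc_gamma_nn_integral:
  fixes a x :: real
  assumes a: "a \<ge> 1" and x: "x > 0"
  shows "(\<integral>\<^sup>+t. ennreal (t powr (a - 1) * exp (- t)) * indicator {0<..x} t \<partial>lborel)
      = ennreal (lower_inc_gamma a x)"
    and "lower_inc_gamma a x \<ge> 0"
proof -
  let ?f = "\<lambda>t::real. t powr (a - 1) * exp (- t)"
  have gamma_eq: "lower_inc_gamma a x = (\<integral>t. indicator {0<..<x} t *\<^sub>R ?f t \<partial>lborel)"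
    using x by (simp add: lower_inc_gamma_def interval_lebesgue_integral_def
        set_lebesgue_integral_def zero_ereal_def)
  then show "lower_inc_gamma a x \<ge> 0"
    by (simp add: Bochner_Integration.integral_nonneg)
  have integral_eq: "(\<integral>\<^sup>+t. ennreal (?f t) * indicator {0<..x} t \<partial>lborel)
      = (\<integral>\<^sup>+t. ennreal (indicator {0<..<x} t *\<^sub>R ?f t) \<partial>lborel)"
    by (intro nn_integral_cong_AE eventually_mono[OF AE_lborel_singleton[of x]])
       (auto simp: indicator_def)
  have "(\<integral>\<^sup>+t. ennreal (?f t) * indicator {0<..x} t \<partial>lborel)
      \<le> (\<integral>\<^sup>+t. ennreal (x powr (a - 1)) * indicator {0..x} t \<partial>lborel)"
  proof (rule nn_integral_mono)
    fix t :: real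
    have "?f t \<le> x powr (a - 1)" if "0 < t" "t \<le> x"
    proof -
      have "t powr (a - 1) \<le> x powr (a - 1)"
        using that a by (intro powr_mono2) auto
      moreover have "t powr (a - 1) * exp (- t) \<le> t powr (a - 1)"
        using that by (intro mult_left_le) simp_all
      ultimately show ?thesis
        by linarith
    qed
    then show "ennreal (?f t) * indicator {0<..x} t \<le> ennreal (x powr (a - 1)) * indicator {0..x} t"
      by (auto simp: indicator_def)
  qed
  also have "\<dots> = ennreal (x powr (a - 1) * x)"
    using x by (simp add: nn_integral_cmult_indicator ennreal_mult)
  finally have "(\<integral>\<^sup>+t. ennreal (?f t) * indicator {0<..x} t \<partial>lborel) < \<top>"
    by (rule le_less_trans) simp
  then show "(\<integral>\<^sup>+t. ennreal (?f t) * indicator {0<..x} t \<partial>lborel) = ennreal (lower_inc_gamma a x)"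
    unfolding gamma_eq integral_eq by (simp add: integral_eq_nn_integral ennreal_enn2real)
qed

lemma mean_coverage_exponential:
  fixes alpha Tt :: real
  assumes alpha: "alpha > 0" and Tt: "Tt > 0"
  shows "(\<integral>g. min 1 (Tt powr (- 2 / alpha) * g powr (2 / alpha)) \<partial>density lborel (exponential_density 1))
     = exp (- Tt) + Tt powr (- 2 / alpha) * lower_inc_gamma (1 + 2 / alpha) Tt"
proof -
  let ?c = "Tt powr (- 2 / alpha)"
  let ?\<gamma> = "lower_inc_gamma (1 + 2 / alpha) Tt"
  have gamma: "(\<integral>\<^sup>+x. ennreal (x powr (2 / alpha) * exp (- x)) * indicator {0<..Tt} x \<partial>lborel)
      = ennreal ?\<gamma>" "?\<gamma> \<ge> 0"
    using lower_inc_gamma_nn_integral[of "1 + 2 / alpha" Tt] alpha Tt by simp_all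
  have "(\<integral>\<^sup>+g. ennreal (min 1 (?c * g powr (2 / alpha))) \<partial>density lborel (exponential_density 1))
      = (\<integral>\<^sup>+x. ennreal (exponential_density 1 x) * ennreal (min 1 (?c * x powr (2 / alpha))) \<partial>lborel)"
    by (rule nn_integral_density) auto
  also have "\<dots> = (\<integral>\<^sup>+x. ennreal (?c * (x powr (2 / alpha) * exp (- x))) * indicator {0<..Tt} x
           + ennreal (exp (- x)) * indicator {Tt<..} x \<partial>lborel)"
    by (rule nn_integral_cong) (rule exponential_coverage_split[OF alpha Tt])
  also have "\<dots> = ennreal ?c * (\<integral>\<^sup>+x. ennreal (x powr (2 / alpha) * exp (- x))
                     * indicator {0<..Tt} x \<partial>lborel)
      + (\<integral>\<^sup>+x. ennreal (exp (- x)) * indicator {Tt<..} x \<partial>lborel)"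
    by (subst nn_integral_add) (auto simp: nn_integral_cmult[symmetric] ennreal_mult mult.assoc)
  also have "\<dots> = ennreal (?c * ?\<gamma> + exp (- Tt))"
    using gamma by (simp add: nn_integral_exp_tail[OF Tt] ennreal_mult'')
  finally show ?thesis
    using gamma by (simp add: integral_eq_nn_integral enn2real_plus del: ennreal_plus)
qed

section \<open>The average radio resource saving\<close>

lemma saving_eq_one_minus_mean_coverage:
  fixes M :: "'w measure" and Psi :: "'w \<Rightarrow> ((real \<times> real) \<times> real) set"
    and lam alpha D Tt :: real and Q :: "real measure"
  assumes ppp: "marked_ppp M Psi lam Q" and lam: "lam > 0"
    and alpha: "alpha > 0" and D: "D > 0" and Tt: "Tt > 0"
    and Q: "prob_space Q" and sQ: "sets Q = sets borel" and nonneg: "AE g in Q. g \<ge> 0"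
  shows "saving M Psi D alpha (Tt * D powr (- alpha))
           = 1 - (\<integral>g. min 1 (Tt powr (- 2 / alpha) * g powr (2 / alpha)) \<partial>Q)"
proof -
  define A where "A = {p::(real \<times> real) \<times> real.
      fst p \<in> ball 0 D \<and> Tt * D powr (- alpha) \<le> snd p * norm (fst p) powr (- alpha)}"
  define C where "C = ball (0::real \<times> real) D \<times> (UNIV :: real set)"
  define I where "I = (\<integral>g. min 1 (Tt powr (- 2 / alpha) * g powr (2 / alpha)) \<partial>Q)"
  have K: "count_K Psi D \<omega> = card (Psi \<omega> \<inter> C)" for \<omega>
    unfolding count_K_def C_def by (rule arg_cong[where f = card]) auto
  have N: "count_N Psi D alpha (Tt * D powr (- alpha)) \<omega> = card (Psi \<omega> \<inter> A)" for \<omega>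
    unfolding count_N_def A_def by (rule arg_cong[where f = card]) auto
  have "I \<ge> 0"
    unfolding I_def by (rule Bochner_Integration.integral_nonneg) simp
  then have mu_A: "measure (lborel \<Otimes>\<^sub>M Q) A = pi * D^2 * I"
    using coverage_set_measure[OF alpha D Tt Q sQ nonneg] by (simp add: measure_def A_def I_def)
  have mu_C: "measure (lborel \<Otimes>\<^sub>M Q) C = pi * D^2"
    using marked_disk_measure[OF D Q sQ] by (simp add: measure_def C_def)
  have "saving M Psi D alpha (Tt * D powr (- alpha))
      = 1 - measure (lborel \<Otimes>\<^sub>M Q) A / measure (lborel \<Otimes>\<^sub>M Q) C"
    unfolding saving_def K N
  proof (subst marked_ppp_fraction[OF ppp lam])
    show "A \<in> sets (lborel \<Otimes>\<^sub>M Q)" "C \<in> sets (lborel \<Otimes>\<^sub>M Q)"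
      unfolding A_def C_def using sQ by (rule coverage_set_measurable, rule marked_disk_measurable)
    show "bounded (fst ` C)"
      by (simp add: C_def)
    show "measure (lborel \<Otimes>\<^sub>M Q) C > 0"
      using D by (simp add: mu_C)
  qed (auto simp: A_def C_def)
  then show ?thesis
    using D by (simp add: mu_A mu_C I_def)
qed

theorem mainTheorem6:
  fixes M :: "'w measure" and Psi :: "'w \<Rightarrow> ((real \<times> real) \<times> real) set"
    and lam alpha D Tt :: real and Q :: "real measure"
  assumes "lam > 0" and "alpha > 2" and "D > 0" and "Tt > 0"
    and "prob_space Q" and "sets Q = sets borel"
    and "AE g in Q. g \<ge> 0" and "integrable Q (\<lambda>g. g)" and "(\<integral>g. g \<partial>Q) = 1"
    and "marked_ppp M Psi lam Q"
  shows "saving M Psi D alpha (Tt * D powr (- alpha))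
           = 1 - (\<integral>g. min 1 (Tt powr (- 2 / alpha) * g powr (2 / alpha)) \<partial>Q)
       \<and> (Q = density lborel (exponential_density 1) \<longrightarrow>
           saving M Psi D alpha (Tt * D powr (- alpha))
           = 1 - exp (- Tt) - Tt powr (- 2 / alpha) * lower_inc_gamma (1 + 2 / alpha) Tt)"
proof -
  have alpha: "alpha > 0"
    using \<open>alpha > 2\<close> by simp
  have general: "saving M Psi D alpha (Tt * D powr (- alpha))
           = 1 - (\<integral>g. min 1 (Tt powr (- 2 / alpha) * g powr (2 / alpha)) \<partial>Q)"
    using saving_eq_one_minus_mean_coverage[OF \<open>marked_ppp M Psi lam Q\<close> \<open>lam > 0\<close> alpha
        \<open>D > 0\<close> \<open>Tt > 0\<close> \<open>prob_space Q\<close> \<open>sets Q = sets borel\<close> \<open>AE g in Q. g \<ge> 0\<close>] .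
  then show ?thesis
    using mean_coverage_exponential[OF alpha \<open>Tt > 0\<close>] by auto
qed

end
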